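(* Let $\lambda_1\ge\lambda_2\ge\lambda_3>0$ and $D=\mathrm{diag}(\lambda_1,\lambda_2,\lambda_3)$. Every local minimum of $\widetilde W_{1,0}(\cdot;D)$ on $SO(3)$ is a global minimum. In contrast, there exist such $D$ for which $\widetilde W_{1,0}(\cdot;D)$ has local maxima on $SO(3)$ that are not global maxima (e.g. $\mathrm{diag}(1,-1,-1)$ when $\lambda_1>\lambda_2>\lambda_3$ and $\lambda_1-\lambda_2>2$).
   Context: $\mathrm{sym}(Y)=\tfrac12(Y+Y^T)$, $\|Y\|^2=\mathrm{tr}(Y^TY)$ (Frobenius norm). $\widetilde W_{1,0}(R;D)=\|\mathrm{sym}(R^TD-\mathbb I_3)\|^2$ for $R\in SO(3)$. *)

theory Defs
  imports "HOL-Analysis.Analysis"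
begin

definition SO3 :: "(real^3^3) set" where
  "SO3 = {R. orthogonal_matrix R \<and> det R = 1}"

definition diag3 :: "real \<Rightarrow> real \<Rightarrow> real \<Rightarrow> real^3^3" where
  "diag3 a b c = (\<chi> i j. if i = j then (vector [a, b, c] :: real^3) $ i else 0)"

definition msym :: "real^3^3 \<Rightarrow> real^3^3" where
  "msym Y = (1/2) *\<^sub>R (Y + transpose Y)"

definition frob_sq :: "real^3^3 \<Rightarrow> real" where
  "frob_sq Y = trace (transpose Y ** Y)"

definition W10 :: "real^3^3 \<Rightarrow> real^3^3 \<Rightarrow> real" where
  "W10 D R = frob_sq (msym (transpose R ** D - mat 1))"

definition local_min_on :: "('a::metric_space \<Rightarrow> real) \<Rightarrow> 'a set \<Rightarrow> 'a \<Rightarrow> bool" where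
  "local_min_on f S x \<longleftrightarrow> x \<in> S \<and> (\<exists>e>0. \<forall>y\<in>S. dist y x < e \<longrightarrow> f x \<le> f y)"

definition local_max_on :: "('a::metric_space \<Rightarrow> real) \<Rightarrow> 'a set \<Rightarrow> 'a \<Rightarrow> bool" where
  "local_max_on f S x \<longleftrightarrow> x \<in> S \<and> (\<exists>e>0. \<forall>y\<in>S. dist y x < e \<longrightarrow> f y \<le> f x)"

definition global_min_on :: "('a \<Rightarrow> real) \<Rightarrow> 'a set \<Rightarrow> 'a \<Rightarrow> bool" where
  "global_min_on f S x \<longleftrightarrow> x \<in> S \<and> (\<forall>y\<in>S. f x \<le> f y)"

definition global_max_on :: "('a \<Rightarrow> real) \<Rightarrow> 'a set \<Rightarrow> 'a \<Rightarrow> bool" where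
  "global_max_on f S x \<longleftrightarrow> x \<in> S \<and> (\<forall>y\<in>S. f y \<le> f x)"

end

theory Submission
  imports Defs
begin

text \<open>
  For a diagonal \<open>D\<close>, the function \<open>W10 D\<close> on \<open>SO(3)\<close> depends only on the diagonal of \<open>R\<close>,
  through a convex quadratic function of it. Writing \<open>R\<close> via a unit quaternion \<open>(w,x,y,z)\<close>, this
  diagonal is a linear function of \<open>(w\<^sup>2,x\<^sup>2,y\<^sup>2,z\<^sup>2)\<close>. Interpolating these squares linearly between
  two rotations \<open>R\<^sub>0\<close>, \<open>R\<^sub>1\<close> therefore gives a path in \<open>SO(3)\<close> leaving \<open>R\<^sub>0\<close> continuously along
  which \<open>W10 D\<close> lies below the chord, so a strictly better \<open>R\<^sub>1\<close> excludes a local minimum at \<open>R\<^sub>0\<close>.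
  The second claim is a direct second-order estimate at \<open>diag(1,-1,-1)\<close>, compared with the
  larger value at \<open>diag(-1,1,-1)\<close>.
\<close>

definition so3_entries :: "real \<Rightarrow> real \<Rightarrow> real \<Rightarrow> real \<Rightarrow> real \<Rightarrow> real \<Rightarrow> real \<Rightarrow> real \<Rightarrow> real \<Rightarrow> bool" where
  "so3_entries a b c d e f g h k \<longleftrightarrow>
     a*a + d*d + g*g = 1 \<and> b*b + e*e + h*h = 1 \<and> c*c + f*f + k*k = 1 \<and>
     a*b + d*e + g*h = 0 \<and> a*c + d*f + g*k = 0 \<and> b*c + e*f + h*k = 0 \<and>
     a*a + b*b + c*c = 1 \<and> d*d + e*e + f*f = 1 \<and> g*g + h*h + k*k = 1 \<and>
     a*d + b*e + c*f = 0 \<and> a*g + b*h + c*k = 0 \<and> d*g + e*h + f*k = 0 \<and>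
     a*e*k - a*f*h - b*d*k + b*f*g + c*d*h - c*e*g = 1"

lemma SO3_iff_so3_entries:
  "R \<in> SO3 \<longleftrightarrow> so3_entries (R$1$1) (R$1$2) (R$1$3) (R$2$1) (R$2$2) (R$2$3) (R$3$1) (R$3$2) (R$3$3)"
  unfolding SO3_def orthogonal_matrix_def so3_entries_def
  by (simp add: vec_eq_iff forall_3 matrix_matrix_mult_def transpose_def mat_def sum_3 det_3 algebra_simps;
      safe; simp_all add: algebra_simps)

text \<open>A rotation equals its cofactor matrix: each certificate below writes an entry of
  \<open>R - cof R\<close> as a combination of the relations \<open>R\<^sup>T R = I\<close> and \<open>det R = 1\<close>.\<close>

lemma so3_entries_cofactors:
  assumes "so3_entries a b c d e f g h k"
  shows "a = e*k - f*h" "b = f*g - d*k" "c = d*h - e*g"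
        "d = h*c - k*b" "e = k*a - g*c" "f = g*b - h*a"
        "g = b*f - c*e" "h = c*d - a*f" "k = a*e - b*d"
proof -
  let ?det = "a*e*k - a*f*h - b*d*k + b*f*g + c*d*h - c*e*g - 1"
  have "a - (e*k - f*h) = (a*a+d*d+g*g - 1)*(e*k - f*h) + (a*b+d*e+g*h)*(f*g - d*k) + (a*c+d*f+g*k)*(d*h - e*g) - a*?det"
       "b - (f*g - d*k) = (a*b+d*e+g*h)*(e*k - f*h) + (b*b+e*e+h*h - 1)*(f*g - d*k) + (b*c+e*f+h*k)*(d*h - e*g) - b*?det"
       "c - (d*h - e*g) = (a*c+d*f+g*k)*(e*k - f*h) + (b*c+e*f+h*k)*(f*g - d*k) + (c*c+f*f+k*k - 1)*(d*h - e*g) - c*?det"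
       "d - (h*c - k*b) = (a*a+d*d+g*g - 1)*(h*c - k*b) + (a*b+d*e+g*h)*(k*a - g*c) + (a*c+d*f+g*k)*(g*b - h*a) - d*?det"
       "e - (k*a - g*c) = (a*b+d*e+g*h)*(h*c - k*b) + (b*b+e*e+h*h - 1)*(k*a - g*c) + (b*c+e*f+h*k)*(g*b - h*a) - e*?det"
       "f - (g*b - h*a) = (a*c+d*f+g*k)*(h*c - k*b) + (b*c+e*f+h*k)*(k*a - g*c) + (c*c+f*f+k*k - 1)*(g*b - h*a) - f*?det"
       "g - (b*f - c*e) = (a*a+d*d+g*g - 1)*(b*f - c*e) + (a*b+d*e+g*h)*(c*d - a*f) + (a*c+d*f+g*k)*(a*e - b*d) - g*?det"
       "h - (c*d - a*f) = (a*b+d*e+g*h)*(b*f - c*e) + (b*b+e*e+h*h - 1)*(c*d - a*f) + (b*c+e*f+h*k)*(a*e - b*d) - h*?det"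
       "k - (a*e - b*d) = (a*c+d*f+g*k)*(b*f - c*e) + (b*c+e*f+h*k)*(c*d - a*f) + (c*c+f*f+k*k - 1)*(a*e - b*d) - k*?det"
    by (simp_all add: algebra_simps)
  with assms show "a = e*k - f*h" "b = f*g - d*k" "c = d*h - e*g"
        "d = h*c - k*b" "e = k*a - g*c" "f = g*b - h*a"
        "g = b*f - c*e" "h = c*d - a*f" "k = a*e - b*d"
    unfolding so3_entries_def by simp_all
qed

subsection \<open>Unit quaternions parametrise \<open>SO(3)\<close>\<close>

definition quat_rot :: "real \<Rightarrow> real \<Rightarrow> real \<Rightarrow> real \<Rightarrow> real^3^3" where
  "quat_rot w x y z = vector [vector [w^2+x^2-y^2-z^2, 2*(x*y-w*z), 2*(x*z+w*y)],
                              vector [2*(x*y+w*z), w^2-x^2+y^2-z^2, 2*(y*z-w*x)],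
                              vector [2*(x*z-w*y), 2*(y*z+w*x), w^2-x^2-y^2+z^2]]"

definition is_quat_of :: "real \<Rightarrow> real \<Rightarrow> real \<Rightarrow> real \<Rightarrow> real \<Rightarrow> real \<Rightarrow> real \<Rightarrow> real \<Rightarrow> real \<Rightarrow>
    real \<Rightarrow> real \<Rightarrow> real \<Rightarrow> real \<Rightarrow> bool" where
  "is_quat_of a b c d e f g h k w x y z \<longleftrightarrow> w^2+x^2+y^2+z^2 = 1 \<and>
     a = w^2+x^2-y^2-z^2 \<and> b = 2*(x*y-w*z) \<and> c = 2*(x*z+w*y) \<and>
     d = 2*(x*y+w*z) \<and> e = w^2-x^2+y^2-z^2 \<and> f = 2*(y*z-w*x) \<and>
     g = 2*(x*z-w*y) \<and> h = 2*(y*z+w*x) \<and> k = w^2-x^2-y^2+z^2"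

lemma quat_rot_nth:
  "quat_rot w x y z $1$1 = w^2+x^2-y^2-z^2" "quat_rot w x y z $1$2 = 2*(x*y-w*z)"
  "quat_rot w x y z $1$3 = 2*(x*z+w*y)" "quat_rot w x y z $2$1 = 2*(x*y+w*z)"
  "quat_rot w x y z $2$2 = w^2-x^2+y^2-z^2" "quat_rot w x y z $2$3 = 2*(y*z-w*x)"
  "quat_rot w x y z $3$1 = 2*(x*z-w*y)" "quat_rot w x y z $3$2 = 2*(y*z+w*x)"
  "quat_rot w x y z $3$3 = w^2-x^2-y^2+z^2"
  by (simp_all add: quat_rot_def)

lemma quat_rot_SO3:
  assumes "w^2 + x^2 + y^2 + z^2 = 1"
  shows "quat_rot w x y z \<in> SO3"
  unfolding SO3_iff_so3_entries quat_rot_nth so3_entries_def using assms by algebra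

text \<open>Half-angle formulas: \<open>w\<close> is recovered from the trace, then \<open>x, y, z\<close> from the
  antisymmetric part divided by \<open>4w\<close>.\<close>

lemma so3_entries_quat_of_trace_pos:
  assumes S: "so3_entries a b c d e f g h k" and tr: "1 + a + e + k > 0"
  shows "\<exists>w x y z. is_quat_of a b c d e f g h k w x y z"
proof -
  note cof = so3_entries_cofactors[OF S]
  define T where "T = 1+a+e+k"
  have I: "T*(1+a-e-k) = (h-f)^2" "T*(1-a+e-k) = (c-g)^2" "T*(1-a-e+k) = (d-b)^2"
      "(h-f)*(c-g) = T*(b+d)" "(h-f)*(d-b) = T*(c+g)" "(c-g)*(d-b) = T*(f+h)"
    using cof S unfolding so3_entries_def T_def by algebra+
  define w where "w = sqrt T / 2"
  have T: "T > 0" using tr by (simp add: T_def)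
  have w2: "w^2 = T/4" and w: "w > 0" using T by (simp_all add: w_def power_divide)
  define x where "x = (h-f)/(4*w)"
  define y where "y = (c-g)/(4*w)"
  define z where "z = (d-b)/(4*w)"
  have sq: "x^2 = (1+a-e-k)/4" "y^2 = (1-a+e-k)/4" "z^2 = (1-a-e+k)/4"
    unfolding x_def y_def z_def using I(1-3) w2 w T
    by (simp_all add: power_divide power_mult_distrib field_simps)
  have "x*y = (h-f)*(c-g)/(4*T)" "x*z = (h-f)*(d-b)/(4*T)" "y*z = (c-g)*(d-b)/(4*T)"
    using w w2 by (simp_all add: x_def y_def z_def power2_eq_square)
  then have prod: "x*y = (b+d)/4" "x*z = (c+g)/4" "y*z = (f+h)/4"
    using I(4-6) T by simp_all
  have "w*x = (h-f)/4" "w*y = (c-g)/4" "w*z = (d-b)/4"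
    using w by (simp_all add: x_def y_def z_def)
  then have "is_quat_of a b c d e f g h k w x y z"
    unfolding is_quat_of_def w2 sq right_diff_distrib prod by (simp add: T_def field_simps)
  then show ?thesis by blast
qed

text \<open>One of the four numbers \<open>1 \<plusminus> a \<plusminus> e \<plusminus> k\<close> (with an even number of minus signs on
  \<open>a, e, k\<close>) is positive, as they sum to \<open>4\<close>; the other three cases reduce to the first by
  multiplying \<open>R\<close> with a rotation by \<open>\<pi>\<close> about a coordinate axis, which permutes the quaternion.\<close>

lemma so3_entries_quat_of:
  assumes S: "so3_entries a b c d e f g h k"
  shows "\<exists>w x y z. is_quat_of a b c d e f g h k w x y z"
proof -
  consider "1+a+e+k > 0" | "1+a-e-k > 0" | "1-a+e-k > 0" | "1-a-e+k > 0" by linarith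
  then show ?thesis
  proof cases
    case 1
    then show ?thesis using so3_entries_quat_of_trace_pos[OF S] by blast
  next
    case 2
    have "so3_entries a (-b) (-c) d (-e) (-f) g (-h) (-k)"
      using S unfolding so3_entries_def by (simp add: algebra_simps)
    then obtain w x y z where "is_quat_of a (-b) (-c) d (-e) (-f) g (-h) (-k) w x y z"
      using so3_entries_quat_of_trace_pos 2 by fastforce
    then have "is_quat_of a b c d e f g h k (-x) w z (-y)"
      unfolding is_quat_of_def by (auto simp: algebra_simps)
    then show ?thesis by blast
  next
    case 3
    have "so3_entries (-a) b (-c) (-d) e (-f) (-g) h (-k)"
      using S unfolding so3_entries_def by (simp add: algebra_simps)
    then obtain w x y z where "is_quat_of (-a) b (-c) (-d) e (-f) (-g) h (-k) w x y z"
      using so3_entries_quat_of_trace_pos 3 by fastforce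
    then have "is_quat_of a b c d e f g h k (-y) (-z) w x"
      unfolding is_quat_of_def by (auto simp: algebra_simps)
    then show ?thesis by blast
  next
    case 4
    have "so3_entries (-a) (-b) c (-d) (-e) f (-g) (-h) k"
      using S unfolding so3_entries_def by (simp add: algebra_simps)
    then obtain w x y z where "is_quat_of (-a) (-b) c (-d) (-e) f (-g) (-h) k w x y z"
      using so3_entries_quat_of_trace_pos 4 by fastforce
    then have "is_quat_of a b c d e f g h k (-z) y (-x) w"
      unfolding is_quat_of_def by (auto simp: algebra_simps)
    then show ?thesis by blast
  qed
qed

lemma SO3_obtain_quat:
  assumes "R \<in> SO3"
  obtains w x y z where "w^2 + x^2 + y^2 + z^2 = 1" "R = quat_rot w x y z"
proof -
  obtain w x y z where q: "is_quat_of (R$1$1) (R$1$2) (R$1$3) (R$2$1) (R$2$2) (R$2$3) (R$3$1) (R$3$2) (R$3$3) w x y z"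
    using so3_entries_quat_of assms SO3_iff_so3_entries by blast
  then have "R = quat_rot w x y z"
    unfolding is_quat_of_def by (simp add: vec_eq_iff forall_3 quat_rot_nth)
  with q that show ?thesis unfolding is_quat_of_def by blast
qed

lemma quat_rot_tendsto:
  assumes "(f \<longlongrightarrow> w) F" "(g \<longlongrightarrow> x) F" "(h \<longlongrightarrow> y) F" "(k \<longlongrightarrow> z) F"
  shows "((\<lambda>s. quat_rot (f s) (g s) (h s) (k s)) \<longlongrightarrow> quat_rot w x y z) F"
proof (rule vec_tendstoI)
  fix i :: 3
  show "((\<lambda>s. quat_rot (f s) (g s) (h s) (k s) $ i) \<longlongrightarrow> quat_rot w x y z $ i) F"
  proof (rule vec_tendstoI)
    fix j :: 3
    from exhaust_3[of i] exhaust_3[of j]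
    show "((\<lambda>s. quat_rot (f s) (g s) (h s) (k s) $ i $ j) \<longlongrightarrow> quat_rot w x y z $ i $ j) F"
      by (elim disjE) (simp_all add: quat_rot_nth, (intro tendsto_intros assms)+)
  qed
qed

subsection \<open>Reduction to the diagonal\<close>

definition W10_diag :: "real \<Rightarrow> real \<Rightarrow> real \<Rightarrow> real \<Rightarrow> real \<Rightarrow> real \<Rightarrow> real" where
  "W10_diag l1 l2 l3 u v t = 3 + (l1^2 + l2^2 + l3^2) / 2 + (l1*u + l2 * v + l3*t)^2 / 2
     - (l2*l3*u + l1*l3 * v + l1*l2*t) - 2 * (l1*u + l2 * v + l3*t)"

lemma diag3_nth: "diag3 a b c $ i $ j = (if i = j then (vector [a,b,c] :: real^3) $ i else 0)"
  by (simp add: diag3_def)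

lemma diag3_SO3: "a^2 = 1 \<Longrightarrow> b^2 = 1 \<Longrightarrow> c^2 = 1 \<Longrightarrow> a*b*c = 1 \<Longrightarrow> diag3 a b c \<in> SO3"
  unfolding SO3_iff_so3_entries so3_entries_def by (simp add: diag3_nth power2_eq_square)

lemma W10_diag3_minus_W10_diag:
  fixes R :: "real^3^3"
  defines "a \<equiv> R$1$1" and "b \<equiv> R$1$2" and "c \<equiv> R$1$3" and "d \<equiv> R$2$1" and "e \<equiv> R$2$2"
      and "f \<equiv> R$2$3" and "g \<equiv> R$3$1" and "h \<equiv> R$3$2" and "k \<equiv> R$3$3"
  shows "W10 (diag3 l1 l2 l3) R - W10_diag l1 l2 l3 a e k =
     l1^2/2 * (a*a + b*b + c*c - 1) + l2^2/2 * (d*d + e*e + f*f - 1) + l3^2/2 * (g*g + h*h + k*k - 1)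
     + l1*l2 * (b*d - a*e + k) + l1*l3 * (c*g - a*k + e) + l2*l3 * (f*h - e*k + a)"
  unfolding W10_def W10_diag_def frob_sq_def msym_def trace_def assms
  by (simp add: sum_3 matrix_matrix_mult_def transpose_def mat_def diag3_nth power2_eq_square field_simps)

lemma W10_diag3_SO3:
  assumes "R \<in> SO3"
  shows "W10 (diag3 l1 l2 l3) R = W10_diag l1 l2 l3 (R$1$1) (R$2$2) (R$3$3)"
proof -
  note S = assms[unfolded SO3_iff_so3_entries]
  note cof = so3_entries_cofactors[OF S]
  have "R$1$1 * R$1$1 + R$1$2 * R$1$2 + R$1$3 * R$1$3 = 1"
       "R$2$1 * R$2$1 + R$2$2 * R$2$2 + R$2$3 * R$2$3 = 1"
       "R$3$1 * R$3$1 + R$3$2 * R$3$2 + R$3$3 * R$3$3 = 1"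
    using S unfolding so3_entries_def by blast+
  moreover have "R$1$2 * R$2$1 - R$1$1 * R$2$2 + R$3$3 = 0"
    using cof(9) by (simp add: algebra_simps)
  moreover have "R$1$3 * R$3$1 - R$1$1 * R$3$3 + R$2$2 = 0"
    using cof(5) by (simp add: algebra_simps)
  moreover have "R$2$3 * R$3$2 - R$2$2 * R$3$3 + R$1$1 = 0"
    using cof(1) by (simp add: algebra_simps)
  ultimately have "W10 (diag3 l1 l2 l3) R - W10_diag l1 l2 l3 (R$1$1) (R$2$2) (R$3$3) = 0"
    unfolding W10_diag3_minus_W10_diag by simp
  then show ?thesis by simp
qed

lemma W10_diag3_quat_rot:
  assumes "w^2 + x^2 + y^2 + z^2 = 1"
  shows "W10 (diag3 l1 l2 l3) (quat_rot w x y z) =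
         W10_diag l1 l2 l3 (w^2+x^2-y^2-z^2) (w^2-x^2+y^2-z^2) (w^2-x^2-y^2+z^2)"
  using W10_diag3_SO3[OF quat_rot_SO3[OF assms]] by (simp add: quat_rot_nth)

lemma W10_diag_convex:
  assumes "0 \<le> s" "s \<le> 1"
  shows "W10_diag l1 l2 l3 ((1-s)*u0 + s*u1) ((1-s)* v0 + s* v1) ((1-s)*t0 + s*t1)
         \<le> (1-s) * W10_diag l1 l2 l3 u0 v0 t0 + s * W10_diag l1 l2 l3 u1 v1 t1"
proof -
  define X where "X = l1*u0 + l2 * v0 + l3*t0"
  define Y where "Y = l1*u1 + l2 * v1 + l3*t1"
  have "(1-s) * W10_diag l1 l2 l3 u0 v0 t0 + s * W10_diag l1 l2 l3 u1 v1 t1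
        - W10_diag l1 l2 l3 ((1-s)*u0 + s*u1) ((1-s)* v0 + s* v1) ((1-s)*t0 + s*t1)
      = s*(1-s)*(X-Y)^2/2"
    unfolding W10_diag_def X_def Y_def by (simp add: power2_eq_square field_simps)
  moreover have "s*(1-s)*(X-Y)^2/2 \<ge> 0" using assms by simp
  ultimately show ?thesis by linarith
qed

text \<open>The sign factor makes the path start at \<open>a\<close>; \<open>sgn\<close> would not do, as \<open>sgn 0 = 0\<close>.\<close>

definition sqrt_interp :: "real \<Rightarrow> real \<Rightarrow> real \<Rightarrow> real" where
  "sqrt_interp a b s = (if a < 0 then -1 else 1) * sqrt ((1 - s) * a^2 + s * b^2)"

lemma sqrt_interp_sq:
  assumes "0 \<le> s" "s \<le> 1"
  shows "(sqrt_interp a b s)^2 = (1 - s) * a^2 + s * b^2"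
  using assms by (simp add: sqrt_interp_def power_mult_distrib)

lemma sqrt_interp_tendsto: "(sqrt_interp a b \<longlongrightarrow> a) (at_right 0)"
proof -
  have "(sqrt_interp a b \<longlongrightarrow> sqrt_interp a b 0) (at_right 0)"
    unfolding sqrt_interp_def by (intro tendsto_intros)
  moreover have "sqrt_interp a b 0 = a" by (simp add: sqrt_interp_def abs_if)
  ultimately show ?thesis by simp
qed

lemma SO3_path_W10_below_chord:
  assumes "R0 \<in> SO3" "R1 \<in> SO3"
  obtains p :: "real \<Rightarrow> real^3^3" where "(p \<longlongrightarrow> R0) (at_right 0)"
    and "\<And>s. 0 \<le> s \<Longrightarrow> s \<le> 1 \<Longrightarrow> p s \<in> SO3 \<and>
           W10 (diag3 l1 l2 l3) (p s) \<le> (1-s) * W10 (diag3 l1 l2 l3) R0 + s * W10 (diag3 l1 l2 l3) R1"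
proof -
  obtain w0 x0 y0 z0 where q0: "w0^2 + x0^2 + y0^2 + z0^2 = 1" "R0 = quat_rot w0 x0 y0 z0"
    using SO3_obtain_quat[OF assms(1)] .
  obtain w1 x1 y1 z1 where q1: "w1^2 + x1^2 + y1^2 + z1^2 = 1" "R1 = quat_rot w1 x1 y1 z1"
    using SO3_obtain_quat[OF assms(2)] .
  define p where "p s = quat_rot (sqrt_interp w0 w1 s) (sqrt_interp x0 x1 s)
                                 (sqrt_interp y0 y1 s) (sqrt_interp z0 z1 s)" for s
  have "(p \<longlongrightarrow> R0) (at_right 0)"
    unfolding p_def q0(2) by (intro quat_rot_tendsto sqrt_interp_tendsto)
  moreover have "p s \<in> SO3 \<and>
      W10 (diag3 l1 l2 l3) (p s) \<le> (1-s) * W10 (diag3 l1 l2 l3) R0 + s * W10 (diag3 l1 l2 l3) R1"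
    if s: "0 \<le> s" "s \<le> 1" for s
  proof -
    note sq = sqrt_interp_sq[OF s]
    have unit: "(sqrt_interp w0 w1 s)^2 + (sqrt_interp x0 x1 s)^2 + (sqrt_interp y0 y1 s)^2
                + (sqrt_interp z0 z1 s)^2 = 1"
    proof -
      have "(sqrt_interp w0 w1 s)^2 + (sqrt_interp x0 x1 s)^2 + (sqrt_interp y0 y1 s)^2
            + (sqrt_interp z0 z1 s)^2
          = (1-s)*(w0^2 + x0^2 + y0^2 + z0^2) + s*(w1^2 + x1^2 + y1^2 + z1^2)"
        unfolding sq by (simp add: algebra_simps)
      then show ?thesis using q0(1) q1(1) by simp
    qed
    have "W10 (diag3 l1 l2 l3) (p s) = W10_diag l1 l2 l3
        ((1-s)*(w0^2+x0^2-y0^2-z0^2) + s*(w1^2+x1^2-y1^2-z1^2))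
        ((1-s)*(w0^2-x0^2+y0^2-z0^2) + s*(w1^2-x1^2+y1^2-z1^2))
        ((1-s)*(w0^2-x0^2-y0^2+z0^2) + s*(w1^2-x1^2-y1^2+z1^2))"
      unfolding p_def W10_diag3_quat_rot[OF unit] sq
      by (rule arg_cong3[where f = "W10_diag l1 l2 l3"]; simp add: algebra_simps)
    also have "\<dots> \<le> (1-s) * W10 (diag3 l1 l2 l3) R0 + s * W10 (diag3 l1 l2 l3) R1"
      unfolding q0(2) q1(2) W10_diag3_quat_rot[OF q0(1)] W10_diag3_quat_rot[OF q1(1)]
      using s by (rule W10_diag_convex)
    finally show ?thesis using quat_rot_SO3[OF unit] unfolding p_def by blast
  qed
  ultimately show ?thesis using that by blast
qed

lemma local_min_W10_imp_global_min:
  assumes "local_min_on (W10 (diag3 l1 l2 l3)) SO3 R0"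
  shows "global_min_on (W10 (diag3 l1 l2 l3)) SO3 R0"
  unfolding global_min_on_def
proof (intro conjI ballI)
  let ?W = "W10 (diag3 l1 l2 l3)"
  obtain e where R0: "R0 \<in> SO3" and "e > 0"
    and min: "\<And>R. R \<in> SO3 \<Longrightarrow> dist R R0 < e \<Longrightarrow> ?W R0 \<le> ?W R"
    using assms unfolding local_min_on_def by blast
  show "R0 \<in> SO3" by (fact R0)
  fix R1 assume R1: "R1 \<in> SO3"
  obtain p where lim: "(p \<longlongrightarrow> R0) (at_right 0)"
    and chord: "\<And>s. 0 \<le> s \<Longrightarrow> s \<le> 1 \<Longrightarrow> p s \<in> SO3 \<and> ?W (p s) \<le> (1-s) * ?W R0 + s * ?W R1"
    using SO3_path_W10_below_chord[OF R0 R1] by blast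
  have "eventually (\<lambda>s. dist (p s) R0 < e) (at_right 0)"
    using tendstoD[OF lim \<open>e > 0\<close>] .
  moreover have "eventually (\<lambda>s. 0 < s \<and> s \<le> 1) (at_right (0::real))"
    by (auto simp: eventually_at_right_field intro!: exI[of _ 1])
  ultimately have "\<exists>s. dist (p s) R0 < e \<and> 0 < s \<and> s \<le> 1"
    by (intro eventually_happens'[OF _ eventually_conj]) simp_all
  then obtain s where s: "dist (p s) R0 < e" "0 < s" "s \<le> 1" by blast
  with chord[of s] have "?W R0 \<le> (1-s) * ?W R0 + s * ?W R1"
    by (meson min order_trans less_imp_le)
  then have "s * ?W R0 \<le> s * ?W R1" by (simp add: algebra_simps)
  then show "?W R0 \<le> ?W R1" using s(2) by simp
qed

lemma dist_matrix_entry_le: "\<bar>A$i$j - B$i$j\<bar> \<le> dist A (B::real^3^3)"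
proof -
  have "\<bar>(A-B)$i$j\<bar> \<le> norm ((A-B)$i)" by (rule component_le_norm_cart)
  also have "\<dots> \<le> norm (A-B)" by (rule Finite_Cartesian_Product.norm_nth_le)
  finally show ?thesis by (simp add: dist_norm)
qed

text \<open>In the quaternion coordinates \<open>A = w\<^sup>2, C = y\<^sup>2, D = z\<^sup>2\<close>, which vanish at
  \<open>diag(1,-1,-1)\<close>, the increment of \<open>W10\<close> is \<open>-2T + 2X\<^sup>2\<close> with \<open>T\<close> linear and positive on the orthant
  (this is where \<open>l\<^sub>1 - l\<^sub>2 > 2\<close> and \<open>l\<^sub>1 - l\<^sub>3 > 2\<close> enter) and \<open>X\<close> linear; the square is dominated near the origin.\<close>

lemma W10_diag_local_max_estimate:
  assumes "l2 + l3 \<ge> 0" "l1 - l2 > 2" "l1 - l3 > 2"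
  obtains e :: real where "e > 0"
    and "\<And>A C D. 0 \<le> A \<Longrightarrow> A \<le> e \<Longrightarrow> 0 \<le> C \<Longrightarrow> C \<le> e \<Longrightarrow> 0 \<le> D \<Longrightarrow> D \<le> e \<Longrightarrow>
           W10_diag l1 l2 l3 (1 - 2*C - 2*D) (-1 + 2*A + 2*C) (-1 + 2*A + 2*D)
           \<le> W10_diag l1 l2 l3 1 (-1) (-1)"
proof -
  define p where "p = l2 + l3"
  define q where "q = l1 - l2"
  define r where "r = l1 - l3"
  define m where "m = min (p+2) (min (q-2) (r-2))"
  have pos: "p \<ge> 0" "q > 2" "r > 2" "m > 0" using assms unfolding p_def q_def r_def m_def by auto
  define e where "e = m / (p + q + r)"
  have "e > 0" using pos unfolding e_def by simp
  moreover have "W10_diag l1 l2 l3 (1 - 2*C - 2*D) (-1 + 2*A + 2*C) (-1 + 2*A + 2*D)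
           \<le> W10_diag l1 l2 l3 1 (-1) (-1)"
    if nn: "0 \<le> A" "0 \<le> C" "0 \<le> D" and le: "A \<le> e" "C \<le> e" "D \<le> e" for A C D
  proof -
    define X where "X = p*A - q*C - r*D"
    define S where "S = p*A + q*C + r*D"
    define T where "T = p*(p+2)*A + q*(q-2)*C + r*(r-2)*D"
    have diff: "W10_diag l1 l2 l3 (1 - 2*C - 2*D) (-1 + 2*A + 2*C) (-1 + 2*A + 2*D)
                - W10_diag l1 l2 l3 1 (-1) (-1) = 2*X^2 - 2*T"
      unfolding W10_diag_def X_def T_def p_def q_def r_def by (simp add: power2_eq_square field_simps)
    have S0: "S \<ge> 0" and XS: "\<bar>X\<bar> \<le> S" using nn pos unfolding S_def X_def by (simp_all add: abs_le_iff)
    have "S \<le> (p + q + r) * e" unfolding S_def distrib_right using le pos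
      by (intro add_mono mult_left_mono) auto
    also have "\<dots> = m" using pos unfolding e_def by simp
    finally have Sm: "S \<le> m" .
    have "X^2 \<le> S^2" using XS S0 by (metis abs_le_square_iff abs_of_nonneg)
    also have "\<dots> \<le> S*m" using Sm S0 by (simp add: power2_eq_square mult_left_mono)
    also have "\<dots> = p*A*m + q*C*m + r*D*m" unfolding S_def by (simp add: algebra_simps)
    also have "\<dots> \<le> p*A*(p+2) + q*C*(q-2) + r*D*(r-2)"
      using nn pos unfolding m_def by (intro add_mono mult_left_mono) auto
    finally have "X^2 \<le> T" unfolding T_def by (simp add: algebra_simps)
    with diff show ?thesis by linarith
  qed
  ultimately show ?thesis using that by blast
qed

lemma local_max_W10_at_diag3_1_m1_m1:
  assumes "l2 + l3 \<ge> 0" "l1 - l2 > 2" "l1 - l3 > 2"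
  shows "local_max_on (W10 (diag3 l1 l2 l3)) SO3 (diag3 1 (-1) (-1))"
proof -
  let ?W = "W10 (diag3 l1 l2 l3)"
  let ?E = "diag3 1 (-1) (-1) :: real^3^3"
  obtain e where "e > 0" and estimate: "\<And>A C D. 0 \<le> A \<Longrightarrow> A \<le> e \<Longrightarrow> 0 \<le> C \<Longrightarrow> C \<le> e \<Longrightarrow>
      0 \<le> D \<Longrightarrow> D \<le> e \<Longrightarrow> W10_diag l1 l2 l3 (1 - 2*C - 2*D) (-1 + 2*A + 2*C) (-1 + 2*A + 2*D)
           \<le> W10_diag l1 l2 l3 1 (-1) (-1)"
    using W10_diag_local_max_estimate[OF assms] by blast
  have E: "?E \<in> SO3" by (rule diag3_SO3) auto
  have "?W R \<le> ?W ?E" if R: "R \<in> SO3" "dist R ?E < e" for R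
  proof -
    obtain w x y z where q: "w^2 + x^2 + y^2 + z^2 = 1" "R = quat_rot w x y z"
      using SO3_obtain_quat[OF R(1)] .
    have diag: "R$1$1 = 1 - 2*y^2 - 2*z^2" "R$2$2 = -1 + 2*w^2 + 2*y^2" "R$3$3 = -1 + 2*w^2 + 2*z^2"
      unfolding q(2) quat_rot_nth using q(1) by linarith+
    have "\<bar>R$1$1 - 1\<bar> < e" "\<bar>R$2$2 + 1\<bar> < e"
      using dist_matrix_entry_le[of R 1 1 ?E] dist_matrix_entry_le[of R 2 2 ?E] R(2)
      by (simp_all add: diag3_nth)
    moreover have "0 \<le> w^2" "0 \<le> y^2" "0 \<le> z^2" by simp_all
    ultimately have "W10_diag l1 l2 l3 (R$1$1) (R$2$2) (R$3$3) \<le> W10_diag l1 l2 l3 1 (-1) (-1)"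
      unfolding diag by (intro estimate) linarith+
    then show ?thesis
      using W10_diag3_SO3[OF R(1)] W10_diag3_SO3[OF E] by (simp add: diag3_nth)
  qed
  with E \<open>e > 0\<close> show ?thesis unfolding local_max_on_def by blast
qed

lemma not_global_max_W10_at_diag3_1_m1_m1:
  assumes "l1 > l2"
  shows "\<not> global_max_on (W10 (diag3 l1 l2 l3)) SO3 (diag3 1 (-1) (-1))"
proof -
  have E: "diag3 1 (-1) (-1) \<in> SO3" and E': "diag3 (-1) 1 (-1) \<in> SO3"
    by (rule diag3_SO3; simp)+
  have "W10 (diag3 l1 l2 l3) (diag3 (-1) 1 (-1)) - W10 (diag3 l1 l2 l3) (diag3 1 (-1) (-1))
      = W10_diag l1 l2 l3 (-1) 1 (-1) - W10_diag l1 l2 l3 1 (-1) (-1)"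
    using W10_diag3_SO3[OF E, of l1 l2 l3] W10_diag3_SO3[OF E', of l1 l2 l3] by (simp add: diag3_nth)
  also have "\<dots> = 4*(l1 - l2)"
    unfolding W10_diag_def by (simp add: power2_eq_square field_simps)
  finally have "W10 (diag3 l1 l2 l3) (diag3 1 (-1) (-1)) < W10 (diag3 l1 l2 l3) (diag3 (-1) 1 (-1))"
    using assms by simp
  with E' show ?thesis unfolding global_max_on_def by force
qed

theorem mainTheorem13:
  shows "(\<forall>l1 l2 l3 :: real. l1 \<ge> l2 \<and> l2 \<ge> l3 \<and> l3 > 0 \<longrightarrow>
            (\<forall>R. local_min_on (W10 (diag3 l1 l2 l3)) SO3 R \<longrightarrow>
                 global_min_on (W10 (diag3 l1 l2 l3)) SO3 R))
       \<and> (\<forall>l1 l2 l3 :: real. l1 > l2 \<and> l2 > l3 \<and> l3 > 0 \<and> l1 - l2 > 2 \<longrightarrow>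
            local_max_on (W10 (diag3 l1 l2 l3)) SO3 (diag3 1 (-1) (-1)) \<and>
            \<not> global_max_on (W10 (diag3 l1 l2 l3)) SO3 (diag3 1 (-1) (-1)))"
proof (intro conjI allI impI)
  fix l1 l2 l3 :: real and R :: "real^3^3"
  assume "local_min_on (W10 (diag3 l1 l2 l3)) SO3 R"
  then show "global_min_on (W10 (diag3 l1 l2 l3)) SO3 R"
    by (rule local_min_W10_imp_global_min)
next
  fix l1 l2 l3 :: real
  assume l: "l1 > l2 \<and> l2 > l3 \<and> l3 > 0 \<and> l1 - l2 > 2"
  then show "local_max_on (W10 (diag3 l1 l2 l3)) SO3 (diag3 1 (-1) (-1))"
    by (intro local_max_W10_at_diag3_1_m1_m1) auto
  from l show "\<not> global_max_on (W10 (diag3 l1 l2 l3)) SO3 (diag3 1 (-1) (-1))"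
    by (intro not_global_max_W10_at_diag3_1_m1_m1) auto
qed

end
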